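(* Let $\theta\in(0,\pi)$. For any $r_1,r_2\in(0,\frac{\pi}{2})$ there exists, up to isometry, a unique spherical bigon of angle $\theta$ with sides labeled $1,2$ such that, for $i=1,2$, the disk $D_i\subset\mathbb{S}^2$ whose boundary contains side $i$ has radius $r_i$.
   Context: A spherical bigon is the intersection $D_1\cap D_2$ of two open round disks in the unit sphere $\mathbb{S}^2$ of radii less than $\frac{\pi}{2}$, neither containing the other; its two sides are the boundary arcs lying on $\partial D_1$ and $\partial D_2$, and its angle is the interior angle formed by the two sides at the corners. *)

theory Defs
  imports "HOL-Analysis.Analysis"
begin

definition S2 :: "(real^3) set" where
  "S2 = sphere 0 1"

definition sdist :: "real^3 \<Rightarrow> real^3 \<Rightarrow> real" where
  "sdist x y = arccos (x \<bullet> y)"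

definition sdisk :: "real^3 \<Rightarrow> real \<Rightarrow> (real^3) set" where
  "sdisk c r = {x \<in> S2. sdist c x < r}"

definition is_sdisk :: "(real^3) set \<Rightarrow> real \<Rightarrow> bool" where
  "is_sdisk D r \<longleftrightarrow> (\<exists>c\<in>S2. D = sdisk c r)"

definition is_bigon :: "(real^3) set \<Rightarrow> (real^3) set \<Rightarrow> bool" where
  "is_bigon D1 D2 \<longleftrightarrow>
     (\<exists>r1. 0 < r1 \<and> r1 < pi/2 \<and> is_sdisk D1 r1) \<and>
     (\<exists>r2. 0 < r2 \<and> r2 < pi/2 \<and> is_sdisk D2 r2) \<and>
     \<not> D1 \<subseteq> D2 \<and> \<not> D2 \<subseteq> D1 \<and> D1 \<inter> D2 \<noteq> {}"

text \<open>Side i of the bigon: the part of the boundary of the bigon lying on the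
  boundary circle of D_i.  (Disks are open in the closed set S2, so boundaries
  are closure minus the set.)\<close>

definition bigon_side :: "(real^3) set \<Rightarrow> (real^3) set \<Rightarrow> (real^3) set" where
  "bigon_side Di Dj = (closure (Di \<inter> Dj) - (Di \<inter> Dj)) \<inter> (closure Di - Di)"

definition bigon_corners :: "(real^3) set \<Rightarrow> (real^3) set \<Rightarrow> (real^3) set" where
  "bigon_corners D1 D2 = bigon_side D1 D2 \<inter> bigon_side D2 D1"

definition one_sided_tangent :: "(real^3) set \<Rightarrow> real^3 \<Rightarrow> real^3 \<Rightarrow> bool" where
  "one_sided_tangent S p t \<longleftrightarrow>
     p islimpt S \<and> ((\<lambda>q. (q - p) /\<^sub>R norm (q - p)) \<longlongrightarrow> t) (at p within S)"

definition bigon_angle :: "(real^3) set \<Rightarrow> (real^3) set \<Rightarrow> real \<Rightarrow> bool" where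
  "bigon_angle D1 D2 \<theta> \<longleftrightarrow>
     bigon_corners D1 D2 \<noteq> {} \<and>
     (\<forall>p\<in>bigon_corners D1 D2. \<exists>t1 t2.
        one_sided_tangent (bigon_side D1 D2) p t1 \<and>
        one_sided_tangent (bigon_side D2 D1) p t2 \<and>
        \<theta> = arccos (t1 \<bullet> t2))"

definition sphere_isometry :: "(real^3 \<Rightarrow> real^3) \<Rightarrow> bool" where
  "sphere_isometry f \<longleftrightarrow> f ` S2 = S2 \<and>
     (\<forall>x\<in>S2. \<forall>y\<in>S2. sdist (f x) (f y) = sdist x y)"

end

theory Submission
  imports Defs "HOL-Analysis.Cross3"
begin

unbundle cross3_syntax

(* A disk of radius r < pi/2 centred at c is the cap {x. cos r < c . x}, and side i of D1 Int D2 is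
   the arc of the circle {c_i . x = cos r_i} lying in the closed cap of the other disk. At a corner p
   every one-sided tangent of side i is a unit vector orthogonal to c_i and p, hence equals
   +-(p x c_i) / sin r_i, and it points into the other cap. These two sign conditions fix the relative
   sign of the two tangents, and their inner product yields the spherical law of cosines
     c1 . c2 = cos r1 cos r2 - sin r1 sin r2 cos theta.
   Thus the angle determines c1 . c2, and two pairs of unit vectors with equal inner products differ
   by an orthogonal map (a product of two reflections), which carries disks onto disks. Conversely, for
   centres with this inner product the tangents can be chosen with the required signs, and the chord
   directions along each arc converge to them, so such a bigon exists. *)

lemma S2_iff: "x \<in> S2 \<longleftrightarrow> x \<bullet> x = 1"
  by (simp add: S2_def norm_eq_1)

lemma inner_cross_cross: "((a::real^3) \<times> b) \<bullet> (c \<times> d) = (a \<bullet> c) * (b \<bullet> d) - (a \<bullet> d) * (b \<bullet> c)"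
  by (simp add: cross3_simps)

lemma triple_product_squared:
  "((a::real^3) \<bullet> (b \<times> c))\<^sup>2 =
     (a \<bullet> a) * ((b \<bullet> b) * (c \<bullet> c) - (b \<bullet> c)\<^sup>2) - (a \<bullet> b) * ((a \<bullet> b) * (c \<bullet> c) - (b \<bullet> c) * (a \<bullet> c))
     + (a \<bullet> c) * ((a \<bullet> b) * (b \<bullet> c) - (b \<bullet> b) * (a \<bullet> c))"
  by (simp add: cross3_simps power2_eq_square)

lemma cross_cross_expand: "(a::real^3) \<times> (b \<times> c) = (a \<bullet> c) *\<^sub>R b - (a \<bullet> b) *\<^sub>R c"
  by (simp add: cross3_simps) (auto simp: forall_3 algebra_simps)

lemma orthogonal_both_imp_parallel_cross:
  fixes a b t :: "real^3"
  assumes "t \<bullet> a = 0" "t \<bullet> b = 0"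
  shows "((a \<times> b) \<bullet> (a \<times> b)) *\<^sub>R t = ((a \<times> b) \<bullet> t) *\<^sub>R (a \<times> b)"
proof -
  have "t \<times> (a \<times> b) = 0"
    using assms by (simp add: cross_cross_expand inner_commute)
  then show ?thesis
    using cross_cross_expand[of "a \<times> b" t "a \<times> b"] by simp
qed

lemma sdisk_eq_cap:
  assumes "c \<in> S2" "0 < r" "r < pi"
  shows "sdisk c r = {x \<in> S2. cos r < c \<bullet> x}"
proof -
  have "arccos (c \<bullet> x) < r \<longleftrightarrow> cos r < c \<bullet> x" if "x \<in> S2" for x
  proof -
    have "\<bar>c \<bullet> x\<bar> \<le> 1"
      using Cauchy_Schwarz_ineq2[of c x] assms(1) that by (simp add: S2_def)
    then have "arccos (c \<bullet> x) < arccos (cos r) \<longleftrightarrow> cos r < c \<bullet> x"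
      by (intro arccos_less_mono) auto
    then show ?thesis using assms by (simp add: arccos_cos)
  qed
  then show ?thesis unfolding sdisk_def sdist_def by auto
qed

definition circle_arc :: "real^3 \<Rightarrow> real \<Rightarrow> real^3 \<Rightarrow> real \<Rightarrow> (real^3) set" where
  "circle_arc c \<alpha> d \<beta> = {x \<in> S2. c \<bullet> x = \<alpha> \<and> \<beta> \<le> d \<bullet> x}"

lemma closure_sdisk_subset:
  assumes "c \<in> S2" "0 < r" "r < pi"
  shows "closure (sdisk c r) \<subseteq> {x \<in> S2. cos r \<le> c \<bullet> x}"
proof (rule closure_minimal)
  show "sdisk c r \<subseteq> {x \<in> S2. cos r \<le> c \<bullet> x}"
    using sdisk_eq_cap[OF assms] by auto
  have "{x \<in> S2. cos r \<le> c \<bullet> x} = S2 \<inter> {x. cos r \<le> c \<bullet> x}" by blast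
  then show "closed {x \<in> S2. cos r \<le> c \<bullet> x}"
    by (simp add: S2_def closed_Int closed_halfspace_ge)
qed

lemma bigon_side_subset_circle_arc:
  assumes "c1 \<in> S2" "0 < r1" "r1 < pi" "c2 \<in> S2" "0 < r2" "r2 < pi"
  shows "bigon_side (sdisk c1 r1) (sdisk c2 r2) \<subseteq> circle_arc c1 (cos r1) c2 (cos r2)"
proof
  fix x assume x: "x \<in> bigon_side (sdisk c1 r1) (sdisk c2 r2)"
  have "closure (sdisk c1 r1 \<inter> sdisk c2 r2) \<subseteq> closure (sdisk c2 r2)"
    by (intro closure_mono) auto
  with x closure_sdisk_subset[OF assms(4-6)] have "cos r2 \<le> c2 \<bullet> x"
    unfolding bigon_side_def by blast
  moreover from x closure_sdisk_subset[OF assms(1-3)]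
  have "x \<in> S2" "cos r1 \<le> c1 \<bullet> x" "x \<notin> sdisk c1 r1"
    unfolding bigon_side_def by blast+
  ultimately show "x \<in> circle_arc c1 (cos r1) c2 (cos r2)"
    using sdisk_eq_cap[OF assms(1-3)] by (auto simp: circle_arc_def)
qed

lemma inner_sgn_gt:
  fixes z c :: "'a::real_inner"
  assumes "a < c \<bullet> z" "norm z \<le> 1" "0 < a"
  shows "a < c \<bullet> sgn z"
proof -
  have "z \<noteq> 0" using assms(1,3) by auto
  have "a * norm z \<le> a" using assms(2,3) by (simp add: mult_left_le)
  then show ?thesis using assms(1) \<open>z \<noteq> 0\<close> by (simp add: sgn_div_norm field_simps)
qed

(* Move from x towards q along the chord and project radially back to the sphere; as a1, a2 > 0,
   the projection can only increase c1 . z and c2 . z. *)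
lemma closed_caps_subset_closure_open_caps:
  assumes q: "q \<in> S2" "a1 < c1 \<bullet> q" "a2 < c2 \<bullet> q" and a: "0 < a1" "0 < a2"
  shows "{x \<in> S2. a1 \<le> c1 \<bullet> x \<and> a2 \<le> c2 \<bullet> x} \<subseteq> closure {x \<in> S2. a1 < c1 \<bullet> x \<and> a2 < c2 \<bullet> x}"
    (is "_ \<subseteq> closure ?U")
proof
  fix x assume x: "x \<in> {x \<in> S2. a1 \<le> c1 \<bullet> x \<and> a2 \<le> c2 \<bullet> x}"
  define z where "z \<tau> = (1 - \<tau>) *\<^sub>R x + \<tau> *\<^sub>R q" for \<tau> :: real
  have "(z \<longlongrightarrow> x) (at_right 0)"
    unfolding z_def by (auto intro!: tendsto_eq_intros)
  then have "((\<lambda>\<tau>. z \<tau> /\<^sub>R norm (z \<tau>)) \<longlongrightarrow> x /\<^sub>R norm x) (at_right 0)"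
    using x by (intro tendsto_scaleR tendsto_inverse tendsto_norm) (auto simp: S2_def)
  then have lim: "((\<lambda>\<tau>. sgn (z \<tau>)) \<longlongrightarrow> x) (at_right 0)"
    using x by (simp add: S2_def sgn_div_norm)
  have "sgn (z \<tau>) \<in> closure ?U" if "\<tau> \<in> {0<..<1}" for \<tau>
  proof -
    from that have \<tau>: "0 < \<tau>" "\<tau> < 1" by simp_all
    have "norm (z \<tau>) \<le> (1 - \<tau>) * norm x + \<tau> * norm q"
      unfolding z_def using \<tau> norm_triangle_ineq[of "(1 - \<tau>) *\<^sub>R x" "\<tau> *\<^sub>R q"] by simp
    then have z1: "norm (z \<tau>) \<le> 1" using x q by (simp add: S2_def)
    have above: "a < c \<bullet> sgn (z \<tau>)" if "a \<le> c \<bullet> x" "a < c \<bullet> q" "0 < a" for a c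
    proof (rule inner_sgn_gt[OF _ z1 \<open>0 < a\<close>])
      have "(1 - \<tau>) * a \<le> (1 - \<tau>) * (c \<bullet> x)" "\<tau> * a < \<tau> * (c \<bullet> q)"
        using that \<tau> by (simp_all add: mult_left_mono)
      then show "a < c \<bullet> z \<tau>" by (simp add: z_def inner_add_right algebra_simps)
    qed
    have "z \<tau> \<noteq> 0" using above[of a1 c1] x q a by force
    then have "sgn (z \<tau>) \<in> ?U" using above x q a by (auto simp: S2_def norm_sgn)
    then show ?thesis by (rule subsetD[OF closure_subset])
  qed
  then have "\<forall>\<^sub>F \<tau> in at_right 0. sgn (z \<tau>) \<in> closure ?U"
    by (rule eventually_at_rightI[of 0 1]) simp_all
  then show "x \<in> closure ?U"
    by (rule Lim_in_closed_set[OF closed_closure _ trivial_limit_at_right_real lim])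
qed

lemma bigon_side_eq_circle_arc:
  assumes c: "c1 \<in> S2" "c2 \<in> S2" and r: "0 < r1" "r1 < pi/2" "0 < r2" "r2 < pi/2"
    and q: "q \<in> sdisk c1 r1 \<inter> sdisk c2 r2"
  shows "bigon_side (sdisk c1 r1) (sdisk c2 r2) = circle_arc c1 (cos r1) c2 (cos r2)"
proof
  show "bigon_side (sdisk c1 r1) (sdisk c2 r2) \<subseteq> circle_arc c1 (cos r1) c2 (cos r2)"
    using bigon_side_subset_circle_arc c r by simp
  have caps: "sdisk c1 r1 = {x \<in> S2. cos r1 < c1 \<bullet> x}" "sdisk c2 r2 = {x \<in> S2. cos r2 < c2 \<bullet> x}"
    using sdisk_eq_cap c r by simp_all
  then have inter: "sdisk c1 r1 \<inter> sdisk c2 r2 = {x \<in> S2. cos r1 < c1 \<bullet> x \<and> cos r2 < c2 \<bullet> x}"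
    by auto
  have "circle_arc c1 (cos r1) c2 (cos r2) \<subseteq> closure (sdisk c1 r1 \<inter> sdisk c2 r2)"
  proof -
    have "0 < cos r1" "0 < cos r2" using r by (simp_all add: cos_gt_zero)
    then have "{x \<in> S2. cos r1 \<le> c1 \<bullet> x \<and> cos r2 \<le> c2 \<bullet> x} \<subseteq> closure (sdisk c1 r1 \<inter> sdisk c2 r2)"
      unfolding inter using q inter by (intro closed_caps_subset_closure_open_caps) auto
    then show ?thesis by (auto simp: circle_arc_def)
  qed
  moreover have "closure (sdisk c1 r1 \<inter> sdisk c2 r2) \<subseteq> closure (sdisk c1 r1)"
    by (intro closure_mono) auto
  ultimately show "circle_arc c1 (cos r1) c2 (cos r2) \<subseteq> bigon_side (sdisk c1 r1) (sdisk c2 r2)"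
    unfolding bigon_side_def using caps by (auto simp: circle_arc_def)
qed

(* With tau = tan (phi/2): the circle with centre m through m + g, leaving m + g in direction h. *)
definition circle_path :: "'a::real_vector \<Rightarrow> 'a \<Rightarrow> 'a \<Rightarrow> real \<Rightarrow> 'a" where
  "circle_path m g h \<tau> = m + ((1 - \<tau>\<^sup>2) / (1 + \<tau>\<^sup>2)) *\<^sub>R g + (2 * \<tau> / (1 + \<tau>\<^sup>2)) *\<^sub>R h"

lemma circle_path_tendsto: "(circle_path m g h \<longlongrightarrow> m + g) (at_right 0)"
  for m g h :: "'a::real_normed_vector"
  unfolding circle_path_def by (auto intro!: tendsto_eq_intros)

lemma circle_path_coeffs:
  fixes \<tau> :: real
  shows "(1 - \<tau>\<^sup>2) / (1 + \<tau>\<^sup>2) - 1 = - \<tau> * (2 * \<tau> / (1 + \<tau>\<^sup>2))"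
    and "((1 - \<tau>\<^sup>2) / (1 + \<tau>\<^sup>2))\<^sup>2 + (2 * \<tau> / (1 + \<tau>\<^sup>2))\<^sup>2 = 1"
proof -
  have N: "1 + \<tau>\<^sup>2 \<noteq> 0" by (metis add_pos_nonneg zero_le_power2 zero_less_one order_less_irrefl)
  then show "(1 - \<tau>\<^sup>2) / (1 + \<tau>\<^sup>2) - 1 = - \<tau> * (2 * \<tau> / (1 + \<tau>\<^sup>2))"
    by (simp add: field_simps power2_eq_square)
  have "(1 - \<tau>\<^sup>2)\<^sup>2 + (2 * \<tau>)\<^sup>2 = (1 + \<tau>\<^sup>2)\<^sup>2"
    by (simp add: power2_eq_square algebra_simps)
  then show "((1 - \<tau>\<^sup>2) / (1 + \<tau>\<^sup>2))\<^sup>2 + (2 * \<tau> / (1 + \<tau>\<^sup>2))\<^sup>2 = 1"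
    using N by (simp add: power_divide add_divide_distrib[symmetric])
qed

lemma inner_circle_path_diff:
  "c \<bullet> circle_path m g h \<tau> - c \<bullet> (m + g) = (2 * \<tau> / (1 + \<tau>\<^sup>2)) * (c \<bullet> h - \<tau> * (c \<bullet> g))"
proof -
  define A B where "A = (1 - \<tau>\<^sup>2) / (1 + \<tau>\<^sup>2)" and "B = 2 * \<tau> / (1 + \<tau>\<^sup>2)"
  have "c \<bullet> circle_path m g h \<tau> - c \<bullet> (m + g) = (A - 1) * (c \<bullet> g) + B * (c \<bullet> h)"
    by (simp add: circle_path_def A_def B_def inner_add_right algebra_simps)
  moreover have "A - 1 = - \<tau> * B"
    unfolding A_def B_def by (rule circle_path_coeffs(1))
  ultimately show ?thesis
    unfolding B_def[symmetric] by (simp add: algebra_simps)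
qed

lemma inner_circle_path_self:
  assumes "m \<bullet> g = 0" "m \<bullet> h = 0" "g \<bullet> h = 0" "h \<bullet> h = g \<bullet> g"
  shows "circle_path m g h \<tau> \<bullet> circle_path m g h \<tau> = m \<bullet> m + g \<bullet> g"
proof -
  have "circle_path m g h \<tau> \<bullet> circle_path m g h \<tau> =
      m \<bullet> m + (((1 - \<tau>\<^sup>2) / (1 + \<tau>\<^sup>2))\<^sup>2 + (2 * \<tau> / (1 + \<tau>\<^sup>2))\<^sup>2) * (g \<bullet> g)"
    using assms by (simp add: circle_path_def inner_add_left inner_add_right inner_commute
        power2_eq_square algebra_simps)
  then show ?thesis by (simp only: circle_path_coeffs(2) mult_1)
qed

lemma eventually_inner_circle_path_gt:
  assumes "0 < c \<bullet> h"
  shows "\<forall>\<^sub>F \<tau> in at_right 0. c \<bullet> (m + g) < c \<bullet> circle_path m g h \<tau>"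
proof -
  have "((\<lambda>\<tau>. c \<bullet> h - \<tau> * (c \<bullet> g)) \<longlongrightarrow> c \<bullet> h) (at_right 0)"
    by (auto intro!: tendsto_eq_intros)
  then have "\<forall>\<^sub>F \<tau> in at_right 0. 0 < c \<bullet> h - \<tau> * (c \<bullet> g)"
    using assms by (rule order_tendstoD(1))
  with eventually_at_right_less show ?thesis
  proof eventually_elim
    case (elim \<tau>)
    then have "0 < (2 * \<tau> / (1 + \<tau>\<^sup>2)) * (c \<bullet> h - \<tau> * (c \<bullet> g))"
      by (simp add: add_pos_nonneg)
    then show ?case using inner_circle_path_diff[of c m g h \<tau>] by simp
  qed
qed

lemma eventually_inner_circle_path_less:
  assumes "c \<bullet> h < 0"
  shows "\<forall>\<^sub>F \<tau> in at_right 0. c \<bullet> circle_path m g h \<tau> < c \<bullet> (m + g)"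
  using eventually_inner_circle_path_gt[of "- c" h m g] assms by simp

lemma islimpt_if_tendsto:
  fixes f :: "'b \<Rightarrow> 'a::metric_space"
  assumes "(f \<longlongrightarrow> p) F" "F \<noteq> bot" "\<forall>\<^sub>F x in F. f x \<in> S \<and> f x \<noteq> p"
  shows "p islimpt S"
  unfolding islimpt_approachable
proof (intro allI impI)
  fix e :: real assume "0 < e"
  have ev: "\<forall>\<^sub>F x in F. (f x \<in> S \<and> f x \<noteq> p) \<and> dist (f x) p < e"
    using assms(3) tendstoD[OF assms(1) \<open>0 < e\<close>] by (rule eventually_conj)
  obtain x where "f x \<in> S" "f x \<noteq> p" "dist (f x) p < e"
    using eventually_happens[OF ev] assms(2) by blast
  then show "\<exists>x'\<in>S. x' \<noteq> p \<and> dist x' p < e" by blast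
qed

lemma one_sided_tangent_mem_closed:
  assumes t: "one_sided_tangent S p t" and "closed K"
    and chords: "\<And>q. q \<in> S \<Longrightarrow> q \<noteq> p \<Longrightarrow> (q - p) /\<^sub>R norm (q - p) \<in> K"
  shows "t \<in> K"
proof (rule Lim_in_closed_set[OF \<open>closed K\<close>])
  show "at p within S \<noteq> bot"
    using t by (simp add: one_sided_tangent_def trivial_limit_within)
  show "\<forall>\<^sub>F q in at p within S. (q - p) /\<^sub>R norm (q - p) \<in> K"
    using chords by (auto simp: eventually_at_filter)
  show "((\<lambda>q. (q - p) /\<^sub>R norm (q - p)) \<longlongrightarrow> t) (at p within S)"
    using t by (simp add: one_sided_tangent_def)
qed

lemma inner_chord_S2:
  assumes "p \<in> S2" "q \<in> S2"
  shows "p \<bullet> (q - p) = - (norm (q - p))\<^sup>2 / 2"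
  using assms by (simp add: S2_iff power2_norm_eq_inner inner_diff_left inner_diff_right inner_commute)

lemma one_sided_tangent_orthogonal_S2:
  assumes t: "one_sided_tangent S p t" and "S \<subseteq> S2" "p \<in> S2"
  shows "t \<bullet> p = 0"
proof -
  define w where "w q = (q - p) /\<^sub>R norm (q - p)" for q
  have F: "at p within S \<noteq> bot"
    using t by (simp add: one_sided_tangent_def trivial_limit_within)
  have lim: "((\<lambda>q. p \<bullet> w q) \<longlongrightarrow> p \<bullet> t) (at p within S)"
    using t unfolding one_sided_tangent_def w_def by (intro tendsto_intros) simp
  have "\<forall>\<^sub>F q in at p within S. q \<in> S \<and> q \<noteq> p"
    by (auto simp: eventually_at_filter)
  then have ev: "\<forall>\<^sub>F q in at p within S. - norm (q - p) / 2 = p \<bullet> w q"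
  proof eventually_elim
    case (elim q)
    then have "q \<in> S2" "norm (q - p) \<noteq> 0" using assms(2) by auto
    then show ?case
      using inner_chord_S2[OF \<open>p \<in> S2\<close>] by (simp add: w_def power2_eq_square)
  qed
  have "((\<lambda>q. - norm (q - p) / 2) \<longlongrightarrow> 0) (at p within S)"
    by (auto intro!: tendsto_eq_intros)
  then have "((\<lambda>q. p \<bullet> w q) \<longlongrightarrow> 0) (at p within S)"
    using ev by (rule Lim_transform_eventually)
  then have "p \<bullet> t = 0"
    using tendsto_unique[OF F lim] by simp
  then show ?thesis by (simp add: inner_commute)
qed

lemma one_sided_tangent_circle_arc_props:
  assumes t: "one_sided_tangent S p t" and S: "S \<subseteq> circle_arc c \<alpha> d \<beta>"
    and p: "p \<in> S2" "c \<bullet> p = \<alpha>" "d \<bullet> p = \<beta>"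
  shows "t \<in> S2" "t \<bullet> c = 0" "t \<bullet> p = 0" "0 \<le> d \<bullet> t"
proof -
  have q: "q \<in> S2" "c \<bullet> q = \<alpha>" "\<beta> \<le> d \<bullet> q" if "q \<in> S" for q
    using S that by (auto simp: circle_arc_def)
  show "t \<in> S2"
    by (rule one_sided_tangent_mem_closed[OF t]) (auto simp: S2_def)
  have "t \<in> {y. c \<bullet> y = 0}"
    by (rule one_sided_tangent_mem_closed[OF t closed_hyperplane])
      (simp add: q p inner_diff_right)
  then show "t \<bullet> c = 0" by (simp add: inner_commute)
  have "t \<in> {y. d \<bullet> y \<ge> 0}"
    by (rule one_sided_tangent_mem_closed[OF t closed_halfspace_ge])
      (use q p in \<open>simp add: inner_diff_right\<close>)
  then show "0 \<le> d \<bullet> t" by simp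
  show "t \<bullet> p = 0"
    using one_sided_tangent_orthogonal_S2[OF t _ p(1)] S by (auto simp: circle_arc_def)
qed

lemma islimpt_circle_arc:
  assumes c: "c \<in> S2" and p: "p \<in> S2" "c \<bullet> p = \<alpha>" "d \<bullet> p = \<beta>" and "\<alpha>\<^sup>2 < 1"
    and t: "t \<in> S2" "t \<bullet> c = 0" "t \<bullet> p = 0" "0 < d \<bullet> t"
  shows "p islimpt circle_arc c \<alpha> d \<beta>"
proof -
  define m where "m = \<alpha> *\<^sub>R c"
  define g where "g = p - m"
  define h where "h = norm g *\<^sub>R t"
  have mg: "m + g = p" by (simp add: g_def)
  have gg: "g \<bullet> g = 1 - \<alpha>\<^sup>2"
    using c p by (simp add: g_def m_def S2_iff inner_diff_left inner_diff_right inner_commute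
        power2_eq_square)
  then have "g \<noteq> 0" using \<open>\<alpha>\<^sup>2 < 1\<close> by auto
  have "h \<bullet> h = (norm g)\<^sup>2 * (t \<bullet> t)" by (simp add: h_def power2_eq_square)
  then have "h \<bullet> h = g \<bullet> g" using t by (simp add: S2_iff power2_norm_eq_inner)
  moreover have "m \<bullet> g = 0" "m \<bullet> h = 0" "g \<bullet> h = 0" "c \<bullet> g = 0" "c \<bullet> h = 0"
    using c p t by (simp_all add: m_def g_def h_def S2_iff inner_diff_left inner_diff_right
        inner_commute)
  ultimately have orth: "m \<bullet> g = 0" "m \<bullet> h = 0" "g \<bullet> h = 0" "h \<bullet> h = g \<bullet> g" "c \<bullet> g = 0" "c \<bullet> h = 0"
    by simp_all
  have on_circle: "circle_path m g h \<tau> \<in> S2 \<and> c \<bullet> circle_path m g h \<tau> = \<alpha>" for \<tau>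
  proof -
    have "m \<bullet> m + g \<bullet> g = 1"
      using c gg by (simp add: m_def S2_iff power2_eq_square)
    moreover have "c \<bullet> (m + g) = \<alpha>" using mg p by simp
    ultimately show ?thesis
      using inner_circle_path_self[OF orth(1-4), of \<tau>] inner_circle_path_diff[of c m g h \<tau>] orth(5,6)
      by (simp add: S2_iff)
  qed
  have "0 < d \<bullet> h" "0 < h \<bullet> h"
    using t \<open>g \<noteq> 0\<close> orth(4) by (simp_all add: h_def)
  then have "\<forall>\<^sub>F \<tau> in at_right 0. d \<bullet> p < d \<bullet> circle_path m g h \<tau> \<and> h \<bullet> p < h \<bullet> circle_path m g h \<tau>"
    unfolding mg[symmetric] by (intro eventually_conj eventually_inner_circle_path_gt)
  then have "\<forall>\<^sub>F \<tau> in at_right 0. circle_path m g h \<tau> \<in> circle_arc c \<alpha> d \<beta> \<and> circle_path m g h \<tau> \<noteq> p"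
    by eventually_elim (use on_circle p in \<open>auto simp: circle_arc_def\<close>)
  then show ?thesis
    using circle_path_tendsto[of m g h] unfolding mg
    by (intro islimpt_if_tendsto[where F = "at_right 0"]) simp_all
qed

lemma chord_direction_inner_tangent:
  assumes c: "c \<in> S2" and p: "p \<in> S2" "c \<bullet> p = \<alpha>" and q: "q \<in> S2" "c \<bullet> q = \<alpha>" "q \<noteq> p"
    and "\<alpha>\<^sup>2 < 1" and t: "t \<in> S2" "t \<bullet> c = 0" "t \<bullet> p = 0"
  shows "(1 - \<alpha>\<^sup>2) * (t \<bullet> ((q - p) /\<^sub>R norm (q - p)))\<^sup>2 = 1 - \<alpha>\<^sup>2 - (norm (q - p))\<^sup>2 / 4"
proof -
  define w where "w = (q - p) /\<^sub>R norm (q - p)"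
  define x where "x = p \<times> c"
  define s2 where "s2 = 1 - \<alpha>\<^sup>2"
  have "s2 \<noteq> 0" using \<open>\<alpha>\<^sup>2 < 1\<close> by (simp add: s2_def)
  have xx: "x \<bullet> x = s2"
    using c p by (simp add: x_def s2_def inner_cross_cross S2_iff inner_commute power2_eq_square)
  have par: "s2 *\<^sub>R t = (x \<bullet> t) *\<^sub>R x"
    using orthogonal_both_imp_parallel_cross[of t p c] t xx by (simp add: x_def)
  then have "t \<bullet> (s2 *\<^sub>R t) = t \<bullet> ((x \<bullet> t) *\<^sub>R x)" by simp
  then have xt: "(x \<bullet> t)\<^sup>2 = s2"
    using t by (simp add: S2_iff inner_commute power2_eq_square)
  have "norm w = 1" using q by (simp add: w_def)
  moreover have "w \<bullet> c = 0"
    using q p by (simp add: w_def inner_diff_left inner_diff_right inner_commute)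
  moreover have "w \<bullet> p = - norm (q - p) / 2"
    using q inner_chord_S2[OF p(1) q(1)] by (simp add: w_def inner_commute power2_eq_square)
  ultimately have w: "w \<bullet> w = 1" "w \<bullet> c = 0" "w \<bullet> p = - norm (q - p) / 2"
    by (simp_all add: norm_eq_1)
  have wx: "(w \<bullet> x)\<^sup>2 = s2 - (norm (q - p))\<^sup>2 / 4"
    using triple_product_squared[of w p c] w c p
    by (simp add: x_def s2_def S2_iff inner_commute power2_eq_square algebra_simps)
  have "w \<bullet> (s2 *\<^sub>R t) = w \<bullet> ((x \<bullet> t) *\<^sub>R x)" using par by simp
  then have "s2\<^sup>2 * (t \<bullet> w)\<^sup>2 = (x \<bullet> t)\<^sup>2 * (w \<bullet> x)\<^sup>2"
    by (simp add: inner_commute power_mult_distrib[symmetric])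
  then have "s2 * (s2 * (t \<bullet> w)\<^sup>2) = s2 * (s2 - (norm (q - p))\<^sup>2 / 4)"
    unfolding xt wx by (simp add: power2_eq_square algebra_simps)
  then show ?thesis
    using \<open>s2 \<noteq> 0\<close> by (simp add: w_def s2_def inner_commute)
qed

lemma norm_diff_le_of_inner_sq:
  fixes w t d :: "'a::real_inner"
  assumes unit: "norm w = 1" "norm t = 1" "norm d = 1"
    and wt: "(w \<bullet> t)\<^sup>2 = 1 - \<epsilon>" and d: "0 \<le> d \<bullet> w" "0 < d \<bullet> t" "2 * \<epsilon> < (d \<bullet> t)\<^sup>2"
  shows "(norm (w - t))\<^sup>2 \<le> 2 * \<epsilon>"
proof -
  have "\<bar>w \<bullet> t\<bar> \<le> 1" using Cauchy_Schwarz_ineq2[of w t] unit by simp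
  have diff: "(norm (w - t))\<^sup>2 = 2 - 2 * (w \<bullet> t)" and sum: "(norm (w + t))\<^sup>2 = 2 + 2 * (w \<bullet> t)"
    using unit[unfolded norm_eq_1] by (simp_all add: power2_norm_eq_inner inner_diff_left inner_diff_right
        inner_add_left inner_add_right inner_commute)
  (* (w . t)^2 determines w . t up to sign; the sign comes from d, which separates t from -t. *)
  have "0 \<le> w \<bullet> t"
  proof (rule ccontr)
    assume "\<not> 0 \<le> w \<bullet> t"
    with \<open>\<bar>w \<bullet> t\<bar> \<le> 1\<close> have "(w \<bullet> t) * (1 + w \<bullet> t) \<le> 0"
      by (intro mult_nonpos_nonneg) auto
    then have "(norm (w + t))\<^sup>2 \<le> 2 * \<epsilon>"
      unfolding sum using wt by (simp add: power2_eq_square algebra_simps)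
    moreover have "d \<bullet> t \<le> norm (w + t)"
      using norm_cauchy_schwarz[of d "w + t"] unit d by (simp add: inner_add_right)
    then have "(d \<bullet> t)\<^sup>2 \<le> (norm (w + t))\<^sup>2" using d by (intro power_mono) auto
    ultimately show False using d by simp
  qed
  with \<open>\<bar>w \<bullet> t\<bar> \<le> 1\<close> have "(w \<bullet> t)\<^sup>2 \<le> w \<bullet> t"
    by (simp add: power2_eq_square mult_left_le)
  then show ?thesis unfolding diff using wt by simp
qed

lemma chord_direction_near_tangent:
  assumes c: "c \<in> S2" and d: "d \<in> S2" and p: "p \<in> S2" "c \<bullet> p = \<alpha>" "d \<bullet> p = \<beta>"
    and "\<alpha>\<^sup>2 < 1" and t: "t \<in> S2" "t \<bullet> c = 0" "t \<bullet> p = 0" "0 < d \<bullet> t"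
    and q: "q \<in> circle_arc c \<alpha> d \<beta>" "q \<noteq> p" "(norm (q - p))\<^sup>2 < 2 * (1 - \<alpha>\<^sup>2) * (d \<bullet> t)\<^sup>2"
  shows "(norm ((q - p) /\<^sub>R norm (q - p) - t))\<^sup>2 \<le> (norm (q - p))\<^sup>2 / (2 * (1 - \<alpha>\<^sup>2))"
proof -
  define w where "w = (q - p) /\<^sub>R norm (q - p)"
  define \<epsilon> where "\<epsilon> = (norm (q - p))\<^sup>2 / (4 * (1 - \<alpha>\<^sup>2))"
  have "0 < 1 - \<alpha>\<^sup>2" using \<open>\<alpha>\<^sup>2 < 1\<close> by simp
  from q(1) have "q \<in> S2" "c \<bullet> q = \<alpha>" "\<beta> \<le> d \<bullet> q" by (simp_all add: circle_arc_def)
  then have "(w \<bullet> t)\<^sup>2 = 1 - \<epsilon>"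
    using chord_direction_inner_tangent[OF c p(1,2) _ _ q(2) \<open>\<alpha>\<^sup>2 < 1\<close> t(1-3)] \<open>0 < 1 - \<alpha>\<^sup>2\<close>
    by (simp add: w_def \<epsilon>_def inner_commute field_simps)
  moreover have "0 \<le> d \<bullet> w"
    using \<open>\<beta> \<le> d \<bullet> q\<close> p by (simp add: w_def inner_diff_right)
  moreover have "2 * \<epsilon> < (d \<bullet> t)\<^sup>2"
    using q(3) \<open>0 < 1 - \<alpha>\<^sup>2\<close> by (simp add: \<epsilon>_def field_simps)
  ultimately have "(norm (w - t))\<^sup>2 \<le> 2 * \<epsilon>"
    using q(2) d t by (intro norm_diff_le_of_inner_sq) (auto simp: S2_def w_def)
  then show ?thesis
    using \<open>0 < 1 - \<alpha>\<^sup>2\<close> by (simp add: w_def \<epsilon>_def field_simps)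
qed

lemma one_sided_tangent_circle_arc:
  assumes c: "c \<in> S2" and d: "d \<in> S2" and p: "p \<in> S2" "c \<bullet> p = \<alpha>" "d \<bullet> p = \<beta>"
    and "\<alpha>\<^sup>2 < 1" and t: "t \<in> S2" "t \<bullet> c = 0" "t \<bullet> p = 0" "0 < d \<bullet> t"
  shows "one_sided_tangent (circle_arc c \<alpha> d \<beta>) p t"
proof -
  let ?S = "circle_arc c \<alpha> d \<beta>"
  define w where "w q = (q - p) /\<^sub>R norm (q - p)" for q
  define s2 where "s2 = 1 - \<alpha>\<^sup>2"
  have "0 < s2" using \<open>\<alpha>\<^sup>2 < 1\<close> by (simp add: s2_def)
  have "((\<lambda>q. (norm (q - p))\<^sup>2) \<longlongrightarrow> 0) (at p within ?S)"
    by (auto intro!: tendsto_eq_intros)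
  moreover have "0 < 2 * s2 * (d \<bullet> t)\<^sup>2" using \<open>0 < s2\<close> t by simp
  ultimately have "\<forall>\<^sub>F q in at p within ?S. (norm (q - p))\<^sup>2 < 2 * s2 * (d \<bullet> t)\<^sup>2"
    by (rule order_tendstoD(2))
  moreover have "\<forall>\<^sub>F q in at p within ?S. q \<in> ?S \<and> q \<noteq> p"
    by (auto simp: eventually_at_filter)
  ultimately have "\<forall>\<^sub>F q in at p within ?S. norm (w q - t) \<le> sqrt ((norm (q - p))\<^sup>2 / (2 * s2))"
    by eventually_elim
      (use chord_direction_near_tangent[OF c d p \<open>\<alpha>\<^sup>2 < 1\<close> t] in \<open>simp add: w_def s2_def real_le_rsqrt\<close>)
  moreover have "((\<lambda>q. sqrt ((norm (q - p))\<^sup>2 / (2 * s2))) \<longlongrightarrow> 0) (at p within ?S)"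
    using \<open>0 < s2\<close> by (auto intro!: tendsto_eq_intros)
  ultimately have "((\<lambda>q. w q - t) \<longlongrightarrow> 0) (at p within ?S)"
    by (rule Lim_null_comparison)
  then have "(w \<longlongrightarrow> t) (at p within ?S)"
    by (simp add: Lim_null[symmetric])
  moreover have "p islimpt ?S"
    using islimpt_circle_arc[OF c p \<open>\<alpha>\<^sup>2 < 1\<close> t] .
  ultimately show ?thesis
    by (simp add: one_sided_tangent_def w_def[abs_def])
qed

lemma unit_orthogonal_both_eq_cross:
  fixes a b t :: "real^3"
  assumes "t \<in> S2" "t \<bullet> a = 0" "t \<bullet> b = 0" "(a \<times> b) \<bullet> (a \<times> b) = s\<^sup>2" "0 < s"
  obtains \<sigma> where "\<sigma> \<in> {-1, 1}" "t = (\<sigma> / s) *\<^sub>R (a \<times> b)"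
proof -
  define k where "k = (a \<times> b) \<bullet> t"
  have par: "s\<^sup>2 *\<^sub>R t = k *\<^sub>R (a \<times> b)"
    using orthogonal_both_imp_parallel_cross[OF assms(2,3)] assms(4) by (simp add: k_def)
  then have "t \<bullet> (s\<^sup>2 *\<^sub>R t) = t \<bullet> (k *\<^sub>R (a \<times> b))" by simp
  then have "k\<^sup>2 = s\<^sup>2"
    using assms(1) by (simp add: S2_iff k_def inner_commute power2_eq_square)
  then have \<sigma>: "k / s \<in> {-1, 1}"
    using \<open>0 < s\<close> by (auto simp: power2_eq_iff)
  have "t = (1 / s\<^sup>2) *\<^sub>R (s\<^sup>2 *\<^sub>R t)" using \<open>0 < s\<close> by simp
  also have "\<dots> = (k / s / s) *\<^sub>R (a \<times> b)" unfolding par by (simp add: power2_eq_square)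
  finally have "t = (k / s / s) *\<^sub>R (a \<times> b)" .
  with \<sigma> show ?thesis using that by blast
qed

lemma corner_cross_identities:
  fixes p c1 c2 :: "real^3"
  assumes "p \<in> S2" "c1 \<in> S2" "c2 \<in> S2"
  shows "(p \<times> c1) \<bullet> (p \<times> c1) = 1 - (c1 \<bullet> p)\<^sup>2"
    and "(p \<times> c1) \<bullet> (p \<times> c2) = c1 \<bullet> c2 - (c1 \<bullet> p) * (c2 \<bullet> p)"
    and "c2 \<bullet> (p \<times> c1) = - (c1 \<bullet> (p \<times> c2))"
    and "(c1 \<bullet> (p \<times> c2))\<^sup>2 =
      (1 - (c1 \<bullet> p)\<^sup>2) * (1 - (c2 \<bullet> p)\<^sup>2) - (c1 \<bullet> c2 - (c1 \<bullet> p) * (c2 \<bullet> p))\<^sup>2"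
  using assms triple_product_squared[of c1 p c2]
  by (simp_all add: inner_cross_cross S2_iff inner_commute power2_eq_square algebra_simps)
    (simp add: cross3_simps)

lemma corner_tangents_inner:
  fixes p c1 c2 t1 t2 :: "real^3"
  assumes S2: "p \<in> S2" "c1 \<in> S2" "c2 \<in> S2"
    and p: "c1 \<bullet> p = cos r1" "c2 \<bullet> p = cos r2" and r: "0 < sin r1" "0 < sin r2"
    and t1: "t1 \<in> S2" "t1 \<bullet> p = 0" "t1 \<bullet> c1 = 0" "0 \<le> c2 \<bullet> t1"
    and t2: "t2 \<in> S2" "t2 \<bullet> p = 0" "t2 \<bullet> c2 = 0" "0 \<le> c1 \<bullet> t2"
    and "(t1 \<bullet> t2)\<^sup>2 \<noteq> 1"
  shows "c1 \<bullet> c2 = cos r1 * cos r2 - sin r1 * sin r2 * (t1 \<bullet> t2)"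
proof -
  define D where "D = c1 \<bullet> (p \<times> c2)"
  define K where "K = c1 \<bullet> c2 - cos r1 * cos r2"
  note id1 = corner_cross_identities[OF S2, unfolded p sin_squared_eq[symmetric], folded D_def K_def]
  note id2 = corner_cross_identities(1)[OF S2(1,3,2), unfolded p sin_squared_eq[symmetric]]
  obtain \<sigma>1 where \<sigma>1: "\<sigma>1 \<in> {-1, 1}" "t1 = (\<sigma>1 / sin r1) *\<^sub>R (p \<times> c1)"
    using unit_orthogonal_both_eq_cross[OF t1(1-3) id1(1) r(1)] .
  obtain \<sigma>2 where \<sigma>2: "\<sigma>2 \<in> {-1, 1}" "t2 = (\<sigma>2 / sin r2) *\<^sub>R (p \<times> c2)"
    using unit_orthogonal_both_eq_cross[OF t2(1-3) id2 r(2)] .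
  have tt: "t1 \<bullet> t2 = \<sigma>1 * \<sigma>2 * K / (sin r1 * sin r2)"
    using id1(2) by (simp add: \<sigma>1(2) \<sigma>2(2) mult_ac)
  have "0 \<le> - \<sigma>1 * D / sin r1" "0 \<le> \<sigma>2 * D / sin r2"
    using t1(4) t2(4) id1(3) by (simp_all add: \<sigma>1(2) \<sigma>2(2) D_def)
  then have signs: "0 \<le> - \<sigma>1 * D" "0 \<le> \<sigma>2 * D"
    using r by (simp_all add: zero_le_divide_iff divide_le_0_iff)
  (* D = 0 iff c1, c2, p are coplanar, and then the tangents are parallel. *)
  show ?thesis
  proof (cases "D = 0")
    case True
    then have "K\<^sup>2 = (sin r1 * sin r2)\<^sup>2"
      using id1(4) by (simp add: power_mult_distrib)
    then have "(t1 \<bullet> t2)\<^sup>2 = 1"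
      using tt \<sigma>1(1) \<sigma>2(1) r by (auto simp: power_divide power_mult_distrib)
    with \<open>(t1 \<bullet> t2)\<^sup>2 \<noteq> 1\<close> show ?thesis by simp
  next
    case False
    with signs \<sigma>1(1) \<sigma>2(1) have "\<sigma>1 * \<sigma>2 = -1"
      by (auto simp: zero_le_mult_iff)
    then show ?thesis
      using tt r by (simp add: K_def field_simps)
  qed
qed

lemma corner_tangents_exist:
  fixes p c1 c2 :: "real^3"
  assumes S2: "p \<in> S2" "c1 \<in> S2" "c2 \<in> S2"
    and p: "c1 \<bullet> p = cos r1" "c2 \<bullet> p = cos r2" and r: "0 < sin r1" "0 < sin r2"
    and "0 < sin \<theta>" and c12: "c1 \<bullet> c2 = cos r1 * cos r2 - sin r1 * sin r2 * cos \<theta>"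
  obtains t1 t2 where "t1 \<in> S2" "t1 \<bullet> p = 0" "t1 \<bullet> c1 = 0" "0 < c2 \<bullet> t1"
    and "t2 \<in> S2" "t2 \<bullet> p = 0" "t2 \<bullet> c2 = 0" "0 < c1 \<bullet> t2"
    and "t1 \<bullet> t2 = cos \<theta>"
proof -
  define D where "D = c1 \<bullet> (p \<times> c2)"
  note id1 = corner_cross_identities[OF S2, unfolded p sin_squared_eq[symmetric] c12, folded D_def]
  note id2 = corner_cross_identities(1)[OF S2(1,3,2), unfolded p sin_squared_eq[symmetric]]
  have "D\<^sup>2 = (sin r1 * sin r2 * sin \<theta>)\<^sup>2"
    using id1(4) by (simp add: power_mult_distrib sin_squared_eq algebra_simps)
  then have "D \<noteq> 0" using r \<open>0 < sin \<theta>\<close> by auto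
  define \<sigma> :: real where "\<sigma> = sgn D"
  have \<sigma>: "\<sigma> * \<sigma> = 1" "0 < \<sigma> * D"
    using \<open>D \<noteq> 0\<close> by (auto simp: \<sigma>_def sgn_if)
  define t1 where "t1 = (- \<sigma> / sin r1) *\<^sub>R (p \<times> c1)"
  define t2 where "t2 = (\<sigma> / sin r2) *\<^sub>R (p \<times> c2)"
  show ?thesis
  proof
    show "t1 \<in> S2" "t2 \<in> S2"
      using id1(1) id2 r \<sigma>(1) by (simp_all add: t1_def t2_def S2_iff power2_eq_square)
    show "t1 \<bullet> p = 0" "t1 \<bullet> c1 = 0" "t2 \<bullet> p = 0" "t2 \<bullet> c2 = 0"
      by (simp_all add: t1_def t2_def dot_cross_self)
    show "0 < c2 \<bullet> t1" "0 < c1 \<bullet> t2"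
      using id1(3) \<sigma>(2) r by (simp_all add: t1_def t2_def D_def)
    show "t1 \<bullet> t2 = cos \<theta>"
      using id1(2) \<sigma>(1) r by (simp add: t1_def t2_def field_simps)
  qed
qed

lemma bigon_corner_on_circles:
  assumes "c1 \<in> S2" "0 < r1" "r1 < pi" "c2 \<in> S2" "0 < r2" "r2 < pi"
    and "p \<in> bigon_corners (sdisk c1 r1) (sdisk c2 r2)"
  shows "p \<in> S2" "c1 \<bullet> p = cos r1" "c2 \<bullet> p = cos r2"
  using bigon_side_subset_circle_arc[OF assms(1-6)] bigon_side_subset_circle_arc[OF assms(4-6,1-3)]
    assms(7)
  unfolding bigon_corners_def circle_arc_def by auto

lemma bigon_angle_imp_inner_centres:
  assumes c: "c1 \<in> S2" "c2 \<in> S2" and r: "0 < r1" "r1 < pi" "0 < r2" "r2 < pi"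
    and \<theta>: "0 < \<theta>" "\<theta> < pi" and angle: "bigon_angle (sdisk c1 r1) (sdisk c2 r2) \<theta>"
  shows "c1 \<bullet> c2 = cos r1 * cos r2 - sin r1 * sin r2 * cos \<theta>"
proof -
  obtain p t1 t2 where p: "p \<in> bigon_corners (sdisk c1 r1) (sdisk c2 r2)"
    and T1: "one_sided_tangent (bigon_side (sdisk c1 r1) (sdisk c2 r2)) p t1"
    and T2: "one_sided_tangent (bigon_side (sdisk c2 r2) (sdisk c1 r1)) p t2"
    and \<theta>_eq: "\<theta> = arccos (t1 \<bullet> t2)"
    using angle unfolding bigon_angle_def by blast
  note p_on = bigon_corner_on_circles[OF c(1) r(1,2) c(2) r(3,4) p]
  note t1 = one_sided_tangent_circle_arc_props[OF T1
      bigon_side_subset_circle_arc[OF c(1) r(1,2) c(2) r(3,4)] p_on]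
  note t2 = one_sided_tangent_circle_arc_props[OF T2
      bigon_side_subset_circle_arc[OF c(2) r(3,4) c(1) r(1,2)] p_on(1,3,2)]
  have "\<bar>t1 \<bullet> t2\<bar> \<le> 1"
    using Cauchy_Schwarz_ineq2[of t1 t2] t1(1) t2(1) by (simp add: S2_def)
  then have "cos \<theta> = t1 \<bullet> t2" by (simp add: \<theta>_eq cos_arccos_abs)
  moreover have "(t1 \<bullet> t2)\<^sup>2 \<noteq> 1"
    using \<theta> \<theta>_eq by (auto simp: power2_eq_1_iff)
  moreover have "0 < sin r1" "0 < sin r2" using r by (simp_all add: sin_gt_zero)
  ultimately show ?thesis
    using corner_tangents_inner[OF p_on(1) c p_on(2,3)] t1 t2 c r
    by (simp add: inner_commute)
qed

lemma inner_centres_imp_bigon_angle: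
  assumes c: "c1 \<in> S2" "c2 \<in> S2" and r: "0 < r1" "r1 < pi/2" "0 < r2" "r2 < pi/2"
    and \<theta>: "0 < \<theta>" "\<theta> < pi"
    and c12: "c1 \<bullet> c2 = cos r1 * cos r2 - sin r1 * sin r2 * cos \<theta>"
    and q: "q \<in> sdisk c1 r1 \<inter> sdisk c2 r2"
    and p0: "p0 \<in> S2" "c1 \<bullet> p0 = cos r1" "c2 \<bullet> p0 = cos r2"
  shows "bigon_angle (sdisk c1 r1) (sdisk c2 r2) \<theta>"
proof -
  have side1: "bigon_side (sdisk c1 r1) (sdisk c2 r2) = circle_arc c1 (cos r1) c2 (cos r2)"
    using bigon_side_eq_circle_arc[OF c r q] .
  have side2: "bigon_side (sdisk c2 r2) (sdisk c1 r1) = circle_arc c2 (cos r2) c1 (cos r1)"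
    using bigon_side_eq_circle_arc[OF c(2,1) r(3,4,1,2)] q by blast
  have "p0 \<in> bigon_corners (sdisk c1 r1) (sdisk c2 r2)"
    using p0 by (simp add: bigon_corners_def side1 side2 circle_arc_def)
  moreover have "\<exists>t1 t2. one_sided_tangent (bigon_side (sdisk c1 r1) (sdisk c2 r2)) p t1 \<and>
      one_sided_tangent (bigon_side (sdisk c2 r2) (sdisk c1 r1)) p t2 \<and> \<theta> = arccos (t1 \<bullet> t2)"
    if p: "p \<in> bigon_corners (sdisk c1 r1) (sdisk c2 r2)" for p
  proof -
    have "r1 < pi" "r2 < pi" using r by simp_all
    note p_on = bigon_corner_on_circles[OF c(1) r(1) \<open>r1 < pi\<close> c(2) r(3) \<open>r2 < pi\<close> p]
    have sin_pos: "0 < sin r1" "0 < sin r2" "0 < sin \<theta>"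
      using r \<theta> by (simp_all add: sin_gt_zero)
    then have cos_sq: "(cos r1)\<^sup>2 < 1" "(cos r2)\<^sup>2 < 1"
      by (simp_all add: cos_squared_eq)
    obtain t1 t2 where t1: "t1 \<in> S2" "t1 \<bullet> p = 0" "t1 \<bullet> c1 = 0" "0 < c2 \<bullet> t1"
      and t2: "t2 \<in> S2" "t2 \<bullet> p = 0" "t2 \<bullet> c2 = 0" "0 < c1 \<bullet> t2"
      and "t1 \<bullet> t2 = cos \<theta>"
      using corner_tangents_exist[OF p_on(1) c p_on(2,3) sin_pos c12] by blast
    then have "\<theta> = arccos (t1 \<bullet> t2)"
      using \<theta> by (simp add: arccos_cos)
    then show ?thesis
      unfolding side1 side2
      using one_sided_tangent_circle_arc[OF c p_on(1,2,3) cos_sq(1) t1(1,3,2,4)]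
        one_sided_tangent_circle_arc[OF c(2,1) p_on(1,3,2) cos_sq(2) t2(1,3,2,4)]
      by blast
  qed
  ultimately show ?thesis unfolding bigon_angle_def by blast
qed

definition reflection :: "'a::real_inner \<Rightarrow> 'a \<Rightarrow> 'a" where
  "reflection v x = x - (2 * (x \<bullet> v) / (v \<bullet> v)) *\<^sub>R v"

lemma orthogonal_transformation_reflection: "orthogonal_transformation (reflection v)"
proof -
  have "linear (reflection v)"
    by (rule linearI) (simp_all add: reflection_def inner_add_left algebra_simps add_divide_distrib)
  moreover have "reflection v x \<bullet> reflection v y = x \<bullet> y" for x y
    by (cases "v = 0")
      (simp_all add: reflection_def inner_diff_left inner_diff_right inner_commute field_simps)
  ultimately show ?thesis by (simp add: orthogonal_transformation_def)
qed

lemma reflection_swap: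
  assumes "u \<bullet> u = w \<bullet> w"
  shows "reflection (u - w) u = w"
proof (cases "u = w")
  case False
  then have "(u - w) \<bullet> (u - w) \<noteq> 0" by simp
  moreover have "2 * (u \<bullet> (u - w)) = (u - w) \<bullet> (u - w)"
    using assms by (simp add: inner_diff_left inner_diff_right inner_commute)
  ultimately show ?thesis by (simp add: reflection_def)
qed (simp add: reflection_def)

lemma reflection_fixes_orthogonal: "x \<bullet> v = 0 \<Longrightarrow> reflection v x = x"
  by (simp add: reflection_def)

lemma orthogonal_transformation_map_pair:
  fixes a1 a2 b1 b2 :: "'a::real_inner"
  assumes "a1 \<bullet> a1 = b1 \<bullet> b1" "a2 \<bullet> a2 = b2 \<bullet> b2" "a1 \<bullet> a2 = b1 \<bullet> b2"
  obtains f where "orthogonal_transformation f" "f a1 = b1" "f a2 = b2"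
proof
  define f where "f = reflection (a1 - b1)"
  define g where "g = reflection (f a2 - b2)"
  have f: "orthogonal_transformation f" and g: "orthogonal_transformation g"
    by (simp_all add: f_def g_def orthogonal_transformation_reflection)
  have "f a1 = b1" by (simp add: f_def reflection_swap assms(1))
  have "f a2 \<bullet> f a2 = b2 \<bullet> b2"
    using f assms(2) by (simp add: orthogonal_transformation_def)
  then have "g (f a2) = b2" by (simp add: g_def reflection_swap)
  have "b1 \<bullet> (f a2 - b2) = 0"
    using f assms(3) \<open>f a1 = b1\<close> by (metis inner_diff_right orthogonal_transformation_def right_minus_eq)
  then have "g b1 = b1" by (simp add: g_def reflection_fixes_orthogonal)
  show "orthogonal_transformation (g \<circ> f)" by (rule orthogonal_transformation_compose[OF g f])
  show "(g \<circ> f) a1 = b1" "(g \<circ> f) a2 = b2"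
    using \<open>f a1 = b1\<close> \<open>g b1 = b1\<close> \<open>g (f a2) = b2\<close> by simp_all
qed

lemma orthogonal_transformation_image_S2:
  assumes "orthogonal_transformation f"
  shows "f ` S2 = S2"
proof (intro equalityI subsetI)
  fix y assume "y \<in> S2"
  moreover obtain z where "y = f z"
    using assms orthogonal_transformation_surj by blast
  ultimately show "y \<in> f ` S2"
    using assms by (auto simp: S2_def orthogonal_transformation_norm)
qed (use assms in \<open>auto simp: S2_def orthogonal_transformation_norm\<close>)

lemma orthogonal_transformation_sphere_isometry:
  "orthogonal_transformation f \<Longrightarrow> sphere_isometry f"
  by (simp add: sphere_isometry_def sdist_def orthogonal_transformation_image_S2
      orthogonal_transformation_def)

lemma orthogonal_transformation_image_sdisk:
  assumes f: "orthogonal_transformation f"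
  shows "f ` sdisk c r = sdisk (f c) r"
proof (intro equalityI subsetI)
  fix y assume "y \<in> sdisk (f c) r"
  moreover obtain z where "y = f z"
    using f orthogonal_transformation_surj by blast
  ultimately show "y \<in> f ` sdisk c r"
    using f by (auto simp: sdisk_def sdist_def S2_def orthogonal_transformation_norm
        orthogonal_transformation_def)
qed (use f in \<open>auto simp: sdisk_def sdist_def S2_def orthogonal_transformation_norm
      orthogonal_transformation_def\<close>)

lemma sdisk_pairs_congruent:
  assumes "c1 \<in> S2" "c2 \<in> S2" "e1 \<in> S2" "e2 \<in> S2" "c1 \<bullet> c2 = e1 \<bullet> e2"
  shows "\<exists>f. sphere_isometry f \<and> f ` sdisk c1 r1 = sdisk e1 r1 \<and> f ` sdisk c2 r2 = sdisk e2 r2"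
proof -
  have "c1 \<bullet> c1 = e1 \<bullet> e1" "c2 \<bullet> c2 = e2 \<bullet> e2" using assms by (simp_all add: S2_iff)
  then obtain f where "orthogonal_transformation f" "f c1 = e1" "f c2 = e2"
    using orthogonal_transformation_map_pair assms(5) by metis
  then show ?thesis
    using orthogonal_transformation_sphere_isometry orthogonal_transformation_image_sdisk by metis
qed

lemma S2_point_above_below:
  assumes p: "p \<in> S2" and "h \<bullet> p = 0" "0 < c \<bullet> h" "d \<bullet> h < 0"
  shows "\<exists>x\<in>S2. c \<bullet> p < c \<bullet> x \<and> d \<bullet> x < d \<bullet> p"
proof -
  define u where "u = sgn h"
  have "h \<noteq> 0" using \<open>0 < c \<bullet> h\<close> by auto
  then have "u \<bullet> u = 1" by (simp add: u_def norm_sgn flip: norm_eq_1)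
  moreover from \<open>h \<noteq> 0\<close> have "u \<bullet> p = 0" "0 < c \<bullet> u" "d \<bullet> u < 0"
    using assms by (simp_all add: u_def sgn_div_norm mult_pos_neg)
  ultimately have u: "u \<bullet> u = 1" "u \<bullet> p = 0" "0 < c \<bullet> u" "d \<bullet> u < 0" by simp_all
  have "\<forall>\<^sub>F \<tau> in at_right 0. c \<bullet> (0 + p) < c \<bullet> circle_path 0 p u \<tau> \<and>
      d \<bullet> circle_path 0 p u \<tau> < d \<bullet> (0 + p)"
    using u(3,4) by (intro eventually_conj eventually_inner_circle_path_gt eventually_inner_circle_path_less)
  then obtain \<tau> where "c \<bullet> p < c \<bullet> circle_path 0 p u \<tau>" "d \<bullet> circle_path 0 p u \<tau> < d \<bullet> p"
    using eventually_happens trivial_limit_at_right_real by force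
  moreover have "circle_path 0 p u \<tau> \<in> S2"
    using inner_circle_path_self[of 0 p u \<tau>] p u by (simp add: S2_iff inner_commute)
  ultimately show ?thesis by blast
qed

lemma bigon_at_corner:
  assumes c: "c1 \<in> S2" "c2 \<in> S2" and r: "0 < r1" "r1 < pi/2" "0 < r2" "r2 < pi/2"
    and \<theta>: "0 < \<theta>" "\<theta> < pi"
    and c12: "c1 \<bullet> c2 = cos r1 * cos r2 - sin r1 * sin r2 * cos \<theta>"
    and p: "p \<in> S2" "c1 \<bullet> p = cos r1" "c2 \<bullet> p = cos r2"
  shows "is_bigon (sdisk c1 r1) (sdisk c2 r2) \<and> bigon_angle (sdisk c1 r1) (sdisk c2 r2) \<theta>"
proof -
  have "0 < sin r1" "0 < sin r2" "0 < sin \<theta>" using r \<theta> by (simp_all add: sin_gt_zero)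
  then obtain t1 t2 where t1: "t1 \<bullet> p = 0" "t1 \<bullet> c1 = 0" "0 < c2 \<bullet> t1"
    and t2: "t2 \<bullet> p = 0" "t2 \<bullet> c2 = 0" "0 < c1 \<bullet> t2"
    using corner_tangents_exist[OF p(1) c p(2,3) _ _ _ c12] by metis
  have caps: "sdisk c1 r1 = {x \<in> S2. cos r1 < c1 \<bullet> x}" "sdisk c2 r2 = {x \<in> S2. cos r2 < c2 \<bullet> x}"
    using sdisk_eq_cap c r by simp_all
  (* Leaving the corner along t1 + t2, t2 - t1 or t1 - t2 one enters D1 Int D2, D1 - D2 or D2 - D1. *)
  obtain x12 where "x12 \<in> S2" "c1 \<bullet> p < c1 \<bullet> x12" "- c2 \<bullet> x12 < - c2 \<bullet> p"
    using S2_point_above_below[OF p(1), of "t1 + t2" c1 "- c2"] t1 t2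
    by (auto simp: inner_add_left inner_add_right inner_commute)
  then have x12: "x12 \<in> sdisk c1 r1 \<inter> sdisk c2 r2" using caps p by simp
  obtain x1 where "x1 \<in> S2" "c1 \<bullet> p < c1 \<bullet> x1" "c2 \<bullet> x1 < c2 \<bullet> p"
    using S2_point_above_below[OF p(1), of "t2 - t1" c1 c2] t1 t2
    by (auto simp: inner_diff_left inner_diff_right inner_commute)
  then have x1: "x1 \<in> sdisk c1 r1 - sdisk c2 r2" using caps p by simp
  obtain x2 where "x2 \<in> S2" "c2 \<bullet> p < c2 \<bullet> x2" "c1 \<bullet> x2 < c1 \<bullet> p"
    using S2_point_above_below[OF p(1), of "t1 - t2" c2 c1] t1 t2
    by (auto simp: inner_diff_left inner_diff_right inner_commute)
  then have x2: "x2 \<in> sdisk c2 r2 - sdisk c1 r1" using caps p by simp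
  from x12 x1 x2 have "is_bigon (sdisk c1 r1) (sdisk c2 r2)"
    using c r unfolding is_bigon_def is_sdisk_def by blast
  moreover have "bigon_angle (sdisk c1 r1) (sdisk c2 r2) \<theta>"
    using inner_centres_imp_bigon_angle[OF c r \<theta> c12 x12 p] .
  ultimately show ?thesis ..
qed

lemma inner_vector_3:
  "(vector [a1, a2, a3] :: real^3) \<bullet> vector [b1, b2, b3] = a1 * b1 + a2 * b2 + a3 * b3"
  by (simp add: inner_vec_def sum_3)

lemma bigon_centres_exist:
  obtains c1 c2 p where "c1 \<in> S2" "c2 \<in> S2" "p \<in> S2" "c1 \<bullet> p = cos r1" "c2 \<bullet> p = cos r2"
    "c1 \<bullet> c2 = cos r1 * cos r2 - sin r1 * sin r2 * cos \<theta>"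
proof
  define c1 :: "real^3" where "c1 = vector [sin r1, 0, cos r1]"
  define c2 :: "real^3" where "c2 = vector [- sin r2 * cos \<theta>, sin r2 * sin \<theta>, cos r2]"
  define p :: "real^3" where "p = vector [0, 0, 1]"
  have "c2 \<bullet> c2 = (sin r2 * cos \<theta>)\<^sup>2 + (sin r2 * sin \<theta>)\<^sup>2 + (cos r2)\<^sup>2"
    by (simp add: c2_def inner_vector_3 power2_eq_square)
  also have "(sin r2 * cos \<theta>)\<^sup>2 + (sin r2 * sin \<theta>)\<^sup>2 = (sin r2)\<^sup>2"
    by (simp add: power_mult_distrib flip: distrib_left)
  finally show "c1 \<in> S2" "c2 \<in> S2" "p \<in> S2"
    by (simp_all add: S2_iff c1_def p_def inner_vector_3 flip: power2_eq_square)
  show "c1 \<bullet> p = cos r1" "c2 \<bullet> p = cos r2"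
    "c1 \<bullet> c2 = cos r1 * cos r2 - sin r1 * sin r2 * cos \<theta>"
    by (simp_all add: c1_def c2_def p_def inner_vector_3)
qed

theorem lemma3p1:
  fixes \<theta> r1 r2 :: real
  assumes "0 < \<theta>" "\<theta> < pi"
    and "0 < r1" "r1 < pi/2" "0 < r2" "r2 < pi/2"
  shows "(\<exists>D1 D2. is_bigon D1 D2 \<and> bigon_angle D1 D2 \<theta> \<and>
                 is_sdisk D1 r1 \<and> is_sdisk D2 r2) \<and>
         (\<forall>D1 D2 E1 E2.
            is_bigon D1 D2 \<and> bigon_angle D1 D2 \<theta> \<and> is_sdisk D1 r1 \<and> is_sdisk D2 r2 \<and>
            is_bigon E1 E2 \<and> bigon_angle E1 E2 \<theta> \<and> is_sdisk E1 r1 \<and> is_sdisk E2 r2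
            \<longrightarrow> (\<exists>f. sphere_isometry f \<and> f ` D1 = E1 \<and> f ` D2 = E2))"
proof (intro conjI allI impI)
  obtain c1 c2 p where "c1 \<in> S2" "c2 \<in> S2" "p \<in> S2" "c1 \<bullet> p = cos r1" "c2 \<bullet> p = cos r2"
    "c1 \<bullet> c2 = cos r1 * cos r2 - sin r1 * sin r2 * cos \<theta>"
    using bigon_centres_exist .
  then have "is_bigon (sdisk c1 r1) (sdisk c2 r2) \<and> bigon_angle (sdisk c1 r1) (sdisk c2 r2) \<theta>"
    using bigon_at_corner assms by blast
  with \<open>c1 \<in> S2\<close> \<open>c2 \<in> S2\<close> show "\<exists>D1 D2. is_bigon D1 D2 \<and> bigon_angle D1 D2 \<theta> \<and> is_sdisk D1 r1 \<and> is_sdisk D2 r2"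
    unfolding is_sdisk_def by blast
next
  fix D1 D2 E1 E2
  assume H: "is_bigon D1 D2 \<and> bigon_angle D1 D2 \<theta> \<and> is_sdisk D1 r1 \<and> is_sdisk D2 r2 \<and>
    is_bigon E1 E2 \<and> bigon_angle E1 E2 \<theta> \<and> is_sdisk E1 r1 \<and> is_sdisk E2 r2"
  then obtain c1 c2 e1 e2 where c: "c1 \<in> S2" "c2 \<in> S2" "e1 \<in> S2" "e2 \<in> S2"
    and D: "D1 = sdisk c1 r1" "D2 = sdisk c2 r2" "E1 = sdisk e1 r1" "E2 = sdisk e2 r2"
    unfolding is_sdisk_def by blast
  have "r1 < pi" "r2 < pi" using assms by simp_all
  then have "c1 \<bullet> c2 = e1 \<bullet> e2"
    using bigon_angle_imp_inner_centres[OF c(1,2) \<open>0 < r1\<close> _ \<open>0 < r2\<close> _ assms(1,2)]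
      bigon_angle_imp_inner_centres[OF c(3,4) \<open>0 < r1\<close> _ \<open>0 < r2\<close> _ assms(1,2)] H D
    by simp
  then show "\<exists>f. sphere_isometry f \<and> f ` D1 = E1 \<and> f ` D2 = E2"
    using sdisk_pairs_congruent[OF c] D by simp
qed

end
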